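(* Let $f:\mathbb{R}^d\to\mathbb{R}$ be Lipschitz continuous and SISTr. For $\delta>0$ and $x\in\mathbb{R}^d$, let $\epsilon_{x,\delta}>0$ be the smallest number such that $$\min\{f(x+\epsilon_{x,\delta}\mathbf{1})-f(x),\ f(x)-f(x-\epsilon_{x,\delta}\mathbf{1})\}=\delta.$$ Then for every bounded set $D\subset\mathbb{R}^d$: - $\sup_{x\in D}\epsilon_{x,\delta}<\infty$ for every $\delta>0$; - $\sup_{x\in D}\epsilon_{x,\delta}\downarrow0$ as $\delta\downarrow0$.
   Context: $\mathbf{1}$ is the all-ones vector in $\mathbb{R}^d$. A function $g:\mathbb{R}^d\to\mathbb{R}$ is SISTr (strictly increasing under scalar translation) if, for every $x\in\mathbb{R}^d$, the map $c\in\mathbb{R}\mapsto g(x+c\mathbf{1})$ is strictly increasing and maps $\mathbb{R}$ onto $\mathbb{R}$. *)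

theory Defs
  imports "HOL-Analysis.Analysis"
begin

definition ones :: "real ^ 'd" where
  "ones = (\<chi> i. 1)"

definition SISTr :: "(real ^ 'd \<Rightarrow> real) \<Rightarrow> bool" where
  "SISTr g \<longleftrightarrow> (\<forall>x. strict_mono (\<lambda>c::real. g (x + c *\<^sub>R ones)) \<and>
                        surj (\<lambda>c::real. g (x + c *\<^sub>R ones)))"

definition eps_xd :: "(real ^ 'd \<Rightarrow> real) \<Rightarrow> real ^ 'd \<Rightarrow> real \<Rightarrow> real" where
  "eps_xd f x \<delta> = Inf {e. e > 0 \<and>
      min (f (x + e *\<^sub>R ones) - f x) (f x - f (x - e *\<^sub>R ones)) = \<delta>}"

end

theory Submission
  imports Defs
begin

text \<open>For fixed \<open>x\<close>, the gap \<open>m\<^sub>x(e) = min (f(x + e\<one>) - f x) (f x - f(x - e\<one>))\<close> is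
  continuous, strictly increasing, zero at \<open>0\<close> and unbounded, so \<open>\<epsilon>\<^sub>x\<^sub>,\<^sub>\<delta>\<close> is its unique
  root at level \<open>\<delta>\<close>, and \<open>\<epsilon>\<^sub>x\<^sub>,\<^sub>\<delta> \<le> e\<close> iff \<open>\<delta> \<le> m\<^sub>x(e)\<close>. For fixed \<open>e\<close> the gap is
  \<open>2L\<close>-Lipschitz in \<open>x\<close>. Hence if \<open>D\<close> lies in the ball of radius \<open>R\<close> about \<open>0\<close>, any \<open>e\<close>
  with \<open>m\<^sub>0(e) \<ge> \<delta> + 2LR\<close> bounds all \<open>\<epsilon>\<^sub>x\<^sub>,\<^sub>\<delta>\<close>, \<open>x \<in> D\<close>. For the limit, \<open>x \<mapsto> m\<^sub>x(e) > 0\<close>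
  attains a positive minimum \<open>c\<close> on the compact closure of \<open>D\<close>, so \<open>\<epsilon>\<^sub>x\<^sub>,\<^sub>\<delta> \<le> e\<close> on \<open>D\<close>
  as soon as \<open>\<delta> \<le> c\<close>.\<close>

definition translation_gap :: "(real ^ 'd \<Rightarrow> real) \<Rightarrow> real ^ 'd \<Rightarrow> real \<Rightarrow> real" where
  "translation_gap f x e = min (f (x + e *\<^sub>R ones) - f x) (f x - f (x - e *\<^sub>R ones))"

lemma translation_gap_0 [simp]: "translation_gap f x 0 = 0"
  by (simp add: translation_gap_def)

lemma SISTr_strict_mono: "SISTr f \<Longrightarrow> strict_mono (\<lambda>c. f (x + c *\<^sub>R ones))"
  by (simp add: SISTr_def)

lemma SISTr_surj: "SISTr f \<Longrightarrow> surj (\<lambda>c. f (x + c *\<^sub>R ones))"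
  by (simp add: SISTr_def)

lemma translation_gap_strict_mono:
  assumes "SISTr f"
  shows "strict_mono (translation_gap f x)"
proof (rule strict_monoI)
  fix a b :: real
  assume "a < b"
  note mono = strict_monoD[OF SISTr_strict_mono[OF assms, of x]]
  have "f (x + a *\<^sub>R ones) < f (x + b *\<^sub>R ones)"
    using mono[OF \<open>a < b\<close>] .
  moreover have "f (x + (- b) *\<^sub>R ones) < f (x + (- a) *\<^sub>R ones)"
    using mono[of "- b" "- a"] \<open>a < b\<close> by simp
  ultimately show "translation_gap f x a < translation_gap f x b"
    by (auto simp: translation_gap_def min_def)
qed

lemma translation_gap_unbounded:
  assumes "SISTr f"
  obtains e where "0 \<le> e" "t \<le> translation_gap f x e"
proof -
  let ?g = "\<lambda>c. f (x + c *\<^sub>R ones)"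
  obtain e\<^sub>1 where e\<^sub>1: "f x + \<bar>t\<bar> = ?g e\<^sub>1"
    using surjD[OF SISTr_surj[OF assms]] by blast
  obtain e\<^sub>2 where e\<^sub>2: "f x - \<bar>t\<bar> = ?g e\<^sub>2"
    using surjD[OF SISTr_surj[OF assms]] by blast
  define e where "e = max 0 (max e\<^sub>1 (- e\<^sub>2))"
  note mono = strict_mono_less_eq[OF SISTr_strict_mono[OF assms, of x]]
  have "?g e\<^sub>1 \<le> ?g e"
    using mono[of e\<^sub>1 e] by (simp add: e_def)
  moreover have "?g (- e) \<le> ?g e\<^sub>2"
    using mono[of "- e" e\<^sub>2] by (simp add: e_def)
  ultimately have "t \<le> translation_gap f x e"
    using e\<^sub>1 e\<^sub>2 by (simp add: translation_gap_def) arith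
  moreover have "0 \<le> e"
    by (simp add: e_def)
  ultimately show thesis
    using that by blast
qed

lemma continuous_on_translation_gap:
  assumes "continuous_on UNIV f"
  shows "continuous_on S (translation_gap f x)"
  unfolding translation_gap_def [abs_def]
  by (intro continuous_intros continuous_on_compose2[OF assms]) auto

lemma lipschitz_on_translation_gap:
  assumes "L-lipschitz_on UNIV f"
  shows "(2 * L)-lipschitz_on UNIV (\<lambda>x. translation_gap f x e)"
proof (rule lipschitz_onI)
  fix x y
  have f: "\<bar>f (x + v) - f (y + v)\<bar> \<le> L * dist x y" for v
    using lipschitz_onD[OF assms, of "x + v" "y + v"] by (simp add: dist_real_def dist_norm)
  have "\<bar>f x - f y\<bar> \<le> L * dist x y"
    using f[of 0] by simp
  moreover note f[of "e *\<^sub>R ones"] f[of "- (e *\<^sub>R ones)"]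
  ultimately show "dist (translation_gap f x e) (translation_gap f y e) \<le> 2 * L * dist x y"
    by (simp add: translation_gap_def dist_real_def abs_le_iff) linarith
  show "0 \<le> 2 * L"
    using lipschitz_on_nonneg[OF assms] by simp
qed

lemma eps_xd_eq_root:
  assumes "SISTr f" "0 < e" "translation_gap f x e = \<delta>"
  shows "eps_xd f x \<delta> = e"
proof -
  have "0 < e' \<and> translation_gap f x e' = \<delta> \<longleftrightarrow> e' = e" for e'
    using strict_mono_eq[OF translation_gap_strict_mono[OF assms(1), of x], of e' e] assms(2,3)
    by auto
  then have "{e'. 0 < e' \<and> translation_gap f x e' = \<delta>} = {e}"
    by simp
  moreover have "eps_xd f x \<delta> = Inf {e'. 0 < e' \<and> translation_gap f x e' = \<delta>}"
    by (simp add: eps_xd_def translation_gap_def)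
  ultimately show ?thesis
    by simp
qed

lemma eps_xd_root:
  assumes "SISTr f" "continuous_on UNIV f" "0 < \<delta>"
  shows "0 < eps_xd f x \<delta>" "translation_gap f x (eps_xd f x \<delta>) = \<delta>"
proof -
  obtain e where "0 \<le> e" "\<delta> \<le> translation_gap f x e"
    using translation_gap_unbounded[OF assms(1)] .
  then obtain e\<^sub>0 where "0 \<le> e\<^sub>0" "translation_gap f x e\<^sub>0 = \<delta>"
    using IVT'[of "translation_gap f x" 0 \<delta> e] assms(3)
      continuous_on_translation_gap[OF assms(2)] by auto
  moreover have "0 < e\<^sub>0"
    using calculation assms(3) by (cases "e\<^sub>0 = 0") auto
  ultimately show "0 < eps_xd f x \<delta>" "translation_gap f x (eps_xd f x \<delta>) = \<delta>"
    using eps_xd_eq_root[OF assms(1)] by auto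
qed

lemma eps_xd_le_iff:
  assumes "SISTr f" "continuous_on UNIV f" "0 < \<delta>"
  shows "eps_xd f x \<delta> \<le> e \<longleftrightarrow> \<delta> \<le> translation_gap f x e"
  using strict_mono_less_eq[OF translation_gap_strict_mono[OF assms(1)]] eps_xd_root[OF assms]
  by metis

lemma eps_xd_mono:
  assumes "SISTr f" "continuous_on UNIV f" "0 < \<delta>" "\<delta> \<le> \<delta>'"
  shows "eps_xd f x \<delta> \<le> eps_xd f x \<delta>'"
  using eps_xd_le_iff[OF assms(1-3)] eps_xd_root(2)[OF assms(1,2), of \<delta>'] assms(3,4) by simp

lemma translation_gap_uniformly_large:
  assumes "L-lipschitz_on UNIV f" "SISTr f" "bounded D"
  obtains e where "\<And>x. x \<in> D \<Longrightarrow> t \<le> translation_gap f x e"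
proof -
  obtain R where R: "\<And>x. x \<in> D \<Longrightarrow> norm x \<le> R"
    using assms(3) by (auto simp: bounded_iff)
  obtain e where e: "t + 2 * L * R \<le> translation_gap f 0 e"
    using translation_gap_unbounded[OF assms(2)] by blast
  have "t \<le> translation_gap f x e" if "x \<in> D" for x
  proof -
    have "translation_gap f 0 e - translation_gap f x e \<le> 2 * L * dist 0 x"
      using lipschitz_onD[OF lipschitz_on_translation_gap[OF assms(1)], of 0 x]
      by (simp add: dist_real_def abs_le_iff)
    also have "\<dots> \<le> 2 * L * R"
      using R[OF that] lipschitz_on_nonneg[OF assms(1)] by (intro mult_left_mono) auto
    finally show ?thesis
      using e by linarith
  qed
  with that show thesis .
qed

lemma translation_gap_uniformly_positive:
  assumes "continuous_on UNIV f" "SISTr f" "bounded D" "0 < e"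
  obtains c where "0 < c" "\<And>x. x \<in> D \<Longrightarrow> c \<le> translation_gap f x e"
proof (cases "D = {}")
  case True
  then show thesis
    using that[of 1] by simp
next
  case False
  have "compact (closure D)"
    using assms(3) by (simp add: compact_closure)
  moreover have "continuous_on (closure D) (\<lambda>x. translation_gap f x e)"
    unfolding translation_gap_def
    by (intro continuous_intros continuous_on_compose2[OF assms(1)]) auto
  ultimately obtain x\<^sub>1 where "\<forall>x \<in> closure D. translation_gap f x\<^sub>1 e \<le> translation_gap f x e"
    using continuous_attains_inf[of "closure D"] False by blast
  moreover have "0 < translation_gap f x\<^sub>1 e"
    using strict_monoD[OF translation_gap_strict_mono[OF assms(2)] assms(4)] by simp
  ultimately show thesis
    using that closure_subset by blast
qed

lemma bdd_above_eps_xd: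
  assumes "L-lipschitz_on UNIV f" "SISTr f" "bounded D" "0 < \<delta>"
  shows "bdd_above ((\<lambda>x. eps_xd f x \<delta>) ` D)"
proof -
  obtain e where "\<And>x. x \<in> D \<Longrightarrow> \<delta> \<le> translation_gap f x e"
    using translation_gap_uniformly_large[OF assms(1-3), of \<delta>] by blast
  then show ?thesis
    using eps_xd_le_iff[OF assms(2) lipschitz_on_continuous_on[OF assms(1)] assms(4)]
    by (intro bdd_above.I2[where M = e]) simp
qed

lemma mono_on_Sup_eps_xd:
  assumes "L-lipschitz_on UNIV f" "SISTr f" "bounded D" "D \<noteq> {}"
  shows "mono_on {0<..} (\<lambda>\<delta>. Sup ((\<lambda>x. eps_xd f x \<delta>) ` D))"
proof (rule mono_onI)
  fix a b :: real
  assume "a \<in> {0<..}" "b \<in> {0<..}" "a \<le> b"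
  then show "Sup ((\<lambda>x. eps_xd f x a) ` D) \<le> Sup ((\<lambda>x. eps_xd f x b) ` D)"
    using eps_xd_mono[OF assms(2) lipschitz_on_continuous_on[OF assms(1)]]
    by (intro cSUP_mono[OF assms(4) bdd_above_eps_xd[OF assms(1-3)]]) auto
qed

lemma Sup_eps_xd_pos:
  assumes "L-lipschitz_on UNIV f" "SISTr f" "bounded D" "D \<noteq> {}" "0 < \<delta>"
  shows "0 < Sup ((\<lambda>x. eps_xd f x \<delta>) ` D)"
proof -
  obtain x where "x \<in> D"
    using assms(4) by blast
  have "0 < eps_xd f x \<delta>"
    using eps_xd_root(1)[OF assms(2) lipschitz_on_continuous_on[OF assms(1)] assms(5)] .
  also have "\<dots> \<le> Sup ((\<lambda>x. eps_xd f x \<delta>) ` D)"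
    using cSUP_upper[OF \<open>x \<in> D\<close> bdd_above_eps_xd[OF assms(1-3,5)]] .
  finally show ?thesis .
qed

lemma eventually_Sup_eps_xd_le:
  assumes "continuous_on UNIV f" "SISTr f" "bounded D" "D \<noteq> {}" "0 < e"
  shows "\<forall>\<^sub>F \<delta> in at_right 0. Sup ((\<lambda>x. eps_xd f x \<delta>) ` D) \<le> e"
proof -
  obtain c where "0 < c" and c: "\<And>x. x \<in> D \<Longrightarrow> c \<le> translation_gap f x e"
    using translation_gap_uniformly_positive[OF assms(1-3,5)] by blast
  have "Sup ((\<lambda>x. eps_xd f x \<delta>) ` D) \<le> e" if "0 < \<delta>" "\<delta> < c" for \<delta>
  proof (rule cSUP_least[OF assms(4)])
    fix x
    assume "x \<in> D"
    then have "\<delta> \<le> translation_gap f x e"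
      using c that(2) by fastforce
    then show "eps_xd f x \<delta> \<le> e"
      using eps_xd_le_iff[OF assms(2,1) that(1)] by blast
  qed
  with \<open>0 < c\<close> show ?thesis
    unfolding eventually_at_right_field by blast
qed

theorem lemma4p6:
  fixes f :: "real ^ 'd \<Rightarrow> real" and D :: "(real ^ 'd) set"
  assumes lip: "\<exists>L. L-lipschitz_on UNIV f"
    and sistr: "SISTr f"
    and bnd: "bounded D" and ne: "D \<noteq> {}"
  shows "(\<forall>\<delta>>0. bdd_above ((\<lambda>x. eps_xd f x \<delta>) ` D))
       \<and> mono_on {0<..} (\<lambda>\<delta>. Sup ((\<lambda>x. eps_xd f x \<delta>) ` D))
       \<and> ((\<lambda>\<delta>. Sup ((\<lambda>x. eps_xd f x \<delta>) ` D)) \<longlongrightarrow> 0) (at_right 0)"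
proof -
  obtain L where L: "L-lipschitz_on UNIV f"
    using lip by blast
  have "((\<lambda>\<delta>. Sup ((\<lambda>x. eps_xd f x \<delta>) ` D)) \<longlongrightarrow> 0) (at_right 0)"
  proof (rule order_tendstoI)
    fix a :: real
    assume "a < 0"
    then show "\<forall>\<^sub>F \<delta> in at_right 0. a < Sup ((\<lambda>x. eps_xd f x \<delta>) ` D)"
      using Sup_eps_xd_pos[OF L sistr bnd ne]
      by (auto intro: eventually_mono[OF eventually_at_right_less] less_trans)
  next
    fix a :: real
    assume "0 < a"
    then show "\<forall>\<^sub>F \<delta> in at_right 0. Sup ((\<lambda>x. eps_xd f x \<delta>) ` D) < a"
      using eventually_Sup_eps_xd_le[OF lipschitz_on_continuous_on[OF L] sistr bnd ne, of "a / 2"]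
      by (auto elim: eventually_mono)
  qed
  then show ?thesis
    using bdd_above_eps_xd[OF L sistr bnd] mono_on_Sup_eps_xd[OF L sistr bnd ne] by blast
qed

end
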